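(* Let $0<a,b<1$, $f\ge3$, and for a rational function $u$ of $(r,y,z)$ write $u[\mathbf 1]$ for its value at $r=y=z=1$. With $\overline w_{m,n}$, $q^*_\ell$, $w^*_\ell$ as in the context: 1. $\overline w_{f-\ell,f+j}[\mathbf 1]=a^\ell b^{j-1}\big(j+\ell\tfrac ba-(\ell+j-1)b\big)$ for all $1\le\ell\le f$, $j\ge1$; 2. $\overline w_{f+j,f-\ell}[\mathbf 1]=a^{\ell-1}b^{j}\big((j+1)+(\ell-1)\tfrac ba-(\ell+j-1)b\big)$ for all $2\le\ell\le f$, $j\ge0$; 3. $q^*_\ell(a)[\mathbf 1]=\ell a^{\ell-1}$ and $w^*_\ell(a)[\mathbf 1]=a^{\ell-1}(\ell-(\ell-1)a)$ for all $\ell\ge1$.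
   Context: Let $r,y,z$ be indeterminates. For $c\in(0,1)$: $\omega_c:=1-(1-c)^2r^2y^2z^2$, $\tau_c:=1+(1-c)^2r^2z^2y(1-y)$, $x_c:=c^2z^2\tau_c^2$, $\beta_c:=1+z^2(c^2-(1-c)^2r^2(y^2+c^2(1-y)^2z^2))$; $w^*_0(c):=(\beta_c-\omega_c)/x_c$, $w^*_1(c):=1$, $w^*_{n+1}(c):=\beta_cw^*_n(c)-x_cw^*_{n-1}(c)$ ($n\ge1$); $q^*_0(c):=-(1-y)(1+y+(1-c)^2r^2y^2z^2(1-y))/\tau_c^2$, $q^*_1(c):=y^2$, $q^*_{n+1}(c):=\beta_cq^*_n(c)-x_cq^*_{n-1}(c)$ ($n\ge1$). Also $\tau(a,b):=1+(1-a)(1-b)r^2z^2y(1-y)$, $x(a,b):=b^2z^2\tau(a,b)^2$, $x(b,a):=a^2z^2\tau(a,b)^2$, $\beta(a,b):=\beta_b-(b-a)b^2(1-b)r^2(1-y)^2z^4$, $\beta(b,a):=\beta_a-(a-b)a^2(1-a)r^2(1-y)^2z^4$. Define $\overline w_{m,m+1}=\overline w_{m+1,m}:=1$ ($m\ge0$), and for $n-m\ge2$ (indices $\ge0$): upward: $\overline w_{m,m+\ell}:=w^*_\ell(a)$ if $m+\ell\le f$, $:=w^*_\ell(b)$ if $f\le m$; $\overline w_{f-\ell,f+1}:=\frac{1-b}{1-a}w^*_{\ell+1}(a)+\frac{b-a}{1-a}w^*_\ell(a)$ ($1\le\ell\le f$); $\overline w_{m,f+2}:=\beta(a,b)\overline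 w_{m,f+1}-x(a,b)\overline w_{m,f}$ ($m\le f-1$); $\overline w_{m,f+j+1}:=\beta_b\overline w_{m,f+j}-x_b\overline w_{m,f+j-1}$ ($m\le f-1$, $j\ge2$). Downward: $\overline w_{m+\ell,m}:=w^*_\ell(a)$ if $m+\ell\le f-1$, $:=w^*_\ell(b)$ if $f-1\le m$; $\overline w_{f+j,f-2}:=\frac{1-a}{1-b}w^*_{j+2}(b)+\frac{a-b}{1-b}w^*_{j+1}(b)$ ($j\ge0$); $\overline w_{n,f-3}:=\beta(b,a)\overline w_{n,f-2}-x(b,a)\overline w_{n,f-1}$ ($n\ge f$); $\overline w_{n,f-\ell-2}:=\beta_a\overline w_{n,f-\ell-1}-x_a\overline w_{n,f-\ell}$ ($n\ge f$, $\ell\ge2$). *)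

theory Defs
  imports Complex_Main
begin

text \<open>All quantities are real-valued functions of the indeterminates r, y, z
(passed as the first three arguments) and of the parameter c (resp. a, b, f).
Evaluation at r = y = z = 1 is obtained by instantiating r y z with 1.\<close>

definition omegac :: "real \<Rightarrow> real \<Rightarrow> real \<Rightarrow> real \<Rightarrow> real" where
  "omegac r y z c = 1 - (1-c)^2 * r^2 * y^2 * z^2"

definition tauc :: "real \<Rightarrow> real \<Rightarrow> real \<Rightarrow> real \<Rightarrow> real" where
  "tauc r y z c = 1 + (1-c)^2 * r^2 * z^2 * y * (1-y)"

definition xc :: "real \<Rightarrow> real \<Rightarrow> real \<Rightarrow> real \<Rightarrow> real" where
  "xc r y z c = c^2 * z^2 * (tauc r y z c)^2"

definition betac :: "real \<Rightarrow> real \<Rightarrow> real \<Rightarrow> real \<Rightarrow> real" where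
  "betac r y z c = 1 + z^2 * (c^2 - (1-c)^2 * r^2 * (y^2 + c^2 * (1-y)^2 * z^2))"

fun wstar :: "real \<Rightarrow> real \<Rightarrow> real \<Rightarrow> real \<Rightarrow> nat \<Rightarrow> real" where
  "wstar r y z c 0 = (betac r y z c - omegac r y z c) / xc r y z c"
| "wstar r y z c (Suc 0) = 1"
| "wstar r y z c (Suc (Suc n)) =
     betac r y z c * wstar r y z c (Suc n) - xc r y z c * wstar r y z c n"

fun qstar :: "real \<Rightarrow> real \<Rightarrow> real \<Rightarrow> real \<Rightarrow> nat \<Rightarrow> real" where
  "qstar r y z c 0 =
     - (1-y) * (1 + y + (1-c)^2 * r^2 * y^2 * z^2 * (1-y)) / (tauc r y z c)^2"
| "qstar r y z c (Suc 0) = y^2"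
| "qstar r y z c (Suc (Suc n)) =
     betac r y z c * qstar r y z c (Suc n) - xc r y z c * qstar r y z c n"

text \<open>tau(a,b), x(a,b), beta(a,b); the versions x(b,a), beta(b,a) of the paper
are obtained by swapping the arguments (tau is symmetric).\<close>

definition tauab :: "real \<Rightarrow> real \<Rightarrow> real \<Rightarrow> real \<Rightarrow> real \<Rightarrow> real" where
  "tauab r y z a b = 1 + (1-a) * (1-b) * r^2 * z^2 * y * (1-y)"

definition xab :: "real \<Rightarrow> real \<Rightarrow> real \<Rightarrow> real \<Rightarrow> real \<Rightarrow> real" where
  "xab r y z a b = b^2 * z^2 * (tauab r y z a b)^2"

definition betaab :: "real \<Rightarrow> real \<Rightarrow> real \<Rightarrow> real \<Rightarrow> real \<Rightarrow> real" where
  "betaab r y z a b = betac r y z b - (b-a) * b^2 * (1-b) * r^2 * (1-y)^2 * z^4"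

text \<open>Upward part across f: wup r y z a b f m j = wbar_{m,f+j} for m \<le> f-1.\<close>

fun wup :: "real \<Rightarrow> real \<Rightarrow> real \<Rightarrow> real \<Rightarrow> real \<Rightarrow> nat \<Rightarrow> nat \<Rightarrow> nat \<Rightarrow> real" where
  "wup r y z a b f m 0 = wstar r y z a (f - m)"
| "wup r y z a b f m (Suc 0) =
     (1-b)/(1-a) * wstar r y z a (f - m + 1) + (b-a)/(1-a) * wstar r y z a (f - m)"
| "wup r y z a b f m (Suc (Suc 0)) =
     betaab r y z a b * wup r y z a b f m 1 - xab r y z a b * wup r y z a b f m 0"
| "wup r y z a b f m (Suc (Suc (Suc j))) =
     betac r y z b * wup r y z a b f m (Suc (Suc j)) - xc r y z b * wup r y z a b f m (Suc j)"

text \<open>Downward part across f: wdown r y z a b f n i = wbar_{n,f-1-i} for n \<ge> f.\<close>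

fun wdown :: "real \<Rightarrow> real \<Rightarrow> real \<Rightarrow> real \<Rightarrow> real \<Rightarrow> nat \<Rightarrow> nat \<Rightarrow> nat \<Rightarrow> real" where
  "wdown r y z a b f n 0 = wstar r y z b (n - f + 1)"
| "wdown r y z a b f n (Suc 0) =
     (1-a)/(1-b) * wstar r y z b (n - f + 2) + (a-b)/(1-b) * wstar r y z b (n - f + 1)"
| "wdown r y z a b f n (Suc (Suc 0)) =
     betaab r y z b a * wdown r y z a b f n 1 - xab r y z b a * wdown r y z a b f n 0"
| "wdown r y z a b f n (Suc (Suc (Suc i))) =
     betac r y z a * wdown r y z a b f n (Suc (Suc i)) - xc r y z a * wdown r y z a b f n (Suc i)"

text \<open>The full array wbar_{m,n} (value for m = n is irrelevant and set to 0).\<close>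

definition wbar :: "real \<Rightarrow> real \<Rightarrow> real \<Rightarrow> real \<Rightarrow> real \<Rightarrow> nat \<Rightarrow> nat \<Rightarrow> nat \<Rightarrow> real" where
  "wbar r y z a b f m n =
    (if n = m + 1 \<or> m = n + 1 then 1
     else if m + 2 \<le> n then
       (if n \<le> f then wstar r y z a (n - m)
        else if f \<le> m then wstar r y z b (n - m)
        else wup r y z a b f m (n - f))
     else if n + 2 \<le> m then
       (if m \<le> f - 1 then wstar r y z a (m - n)
        else if f - 1 \<le> n then wstar r y z b (m - n)
        else wdown r y z a b f m (f - 1 - n))
     else 0)"

end

theory Submission
  imports Defs
begin

text \<open>At r = y = z = 1 every recurrence of the construction becomes
u(n+2) = 2 c u(n+1) - c^2 u(n), whose characteristic polynomial has the double
root c; hence u(n) = c^n u(0) + n c^(n-1) (u(1) - c u(0)).  This applies to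
w*(c) and q*(c), and also to the two sequences crossing the interface f, namely
j \<mapsto> wbar(f-l, f+j) with c = b and l \<mapsto> wbar(f+j, f-l) with c = a: their second
initial value (1-b)/(1-a) w*_{l+1}(a) + (b-a)/(1-a) w*_l(a) (and its mirror image)
is such that u(1) - c u(0) collapses to the single monomial (1-b) a^l.\<close>

lemma double_root_recurrence:
  fixes u :: "nat \<Rightarrow> 'a::comm_ring_1"
  assumes rec: "\<And>n. u (Suc (Suc n)) = 2 * c * u (Suc n) - c\<^sup>2 * u n"
  shows "u n = c ^ n * u 0 + of_nat n * c ^ (n - 1) * (u 1 - c * u 0)"
proof -
  define d where "d = u 1 - c * u 0"
  have closed: "u (Suc k) = c ^ Suc k * u 0 + of_nat (Suc k) * c ^ k * d
      \<and> u (Suc (Suc k)) = c ^ Suc (Suc k) * u 0 + of_nat (Suc (Suc k)) * c ^ Suc k * d" for k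
  proof (induction k)
    case 0
    show ?case unfolding rec[of 0] d_def by (simp add: power2_eq_square algebra_simps)
  next
    case (Suc k)
    then show ?case unfolding rec[of "Suc k"] by (simp add: power2_eq_square algebra_simps)
  qed
  show ?thesis
  proof (cases n)
    case (Suc m)
    with closed[of m] show ?thesis
      unfolding d_def by simp
  qed simp
qed

lemma betac_1 [simp]: "betac 1 1 1 c = 2 * c"
  by (simp add: betac_def power2_eq_square algebra_simps)

lemma xc_1 [simp]: "xc 1 1 1 c = c\<^sup>2"
  by (simp add: xc_def tauc_def)

lemma betaab_1 [simp]: "betaab 1 1 1 a b = 2 * b"
  by (simp add: betaab_def)

lemma xab_1 [simp]: "xab 1 1 1 a b = b\<^sup>2"
  by (simp add: xab_def tauab_def)

lemma wstar_1:
  assumes "c \<noteq> 0"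
  shows "wstar 1 1 1 c n = c ^ n + real n * c ^ (n - 1) * (1 - c)"
proof -
  have start: "wstar 1 1 1 c 0 = 1" "wstar 1 1 1 c 1 = 1"
    using assms by (simp_all add: omegac_def power2_eq_square field_simps)
  have "wstar 1 1 1 c n = c ^ n * wstar 1 1 1 c 0
          + real n * c ^ (n - 1) * (wstar 1 1 1 c 1 - c * wstar 1 1 1 c 0)"
    by (rule double_root_recurrence) simp
  then show ?thesis
    unfolding start by simp
qed

lemma qstar_1: "qstar 1 1 1 c n = real n * c ^ (n - 1)"
  using double_root_recurrence[of "qstar 1 1 1 c" c] by simp

lemma wstar_1_step:
  assumes "c \<noteq> 0"
  shows "wstar 1 1 1 c (Suc k) - c * wstar 1 1 1 c k = c ^ k * (1 - c)"
  using assms by (cases k) (simp_all add: wstar_1 algebra_simps del: wstar.simps)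

lemma interface_start:
  assumes "p \<noteq> 0" "p \<noteq> 1"
  shows "(1 - q) / (1 - p) * wstar 1 1 1 p (Suc k) + (q - p) / (1 - p) * wstar 1 1 1 p k
           - q * wstar 1 1 1 p k = (1 - q) * p ^ k"
proof -
  have "1 - p \<noteq> 0" using assms by simp
  have "(1 - q) / (1 - p) * x + (q - p) / (1 - p) * y - q * y = (1 - q) / (1 - p) * (x - p * y)"
    for x y :: real
    using \<open>1 - p \<noteq> 0\<close> by (simp add: divide_simps) (simp add: algebra_simps)
  with \<open>1 - p \<noteq> 0\<close> show ?thesis
    by (simp add: wstar_1_step[OF \<open>p \<noteq> 0\<close>] del: wstar.simps)
qed

lemma wup_1:
  assumes "a \<noteq> 0" "a \<noteq> 1"
  shows "wup 1 1 1 a b f m j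
           = b ^ j * wstar 1 1 1 a (f - m) + real j * b ^ (j - 1) * ((1 - b) * a ^ (f - m))"
proof -
  have "wup 1 1 1 a b f m (Suc (Suc n))
          = 2 * b * wup 1 1 1 a b f m (Suc n) - b\<^sup>2 * wup 1 1 1 a b f m n" for n
    by (cases n) (simp_all only: wup.simps betac_1 xc_1 betaab_1 xab_1 One_nat_def)
  from double_root_recurrence[of "wup 1 1 1 a b f m", OF this]
  show ?thesis
    using interface_start[OF assms, of b "f - m"] by simp
qed

lemma wdown_1:
  assumes "b \<noteq> 0" "b \<noteq> 1"
  shows "wdown 1 1 1 a b f n i
           = a ^ i * wstar 1 1 1 b (n - f + 1) + real i * a ^ (i - 1) * ((1 - a) * b ^ (n - f + 1))"
proof -
  have "wdown 1 1 1 a b f n (Suc (Suc k))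
          = 2 * a * wdown 1 1 1 a b f n (Suc k) - a\<^sup>2 * wdown 1 1 1 a b f n k" for k
    by (cases k) (simp_all only: wdown.simps betac_1 xc_1 betaab_1 xab_1 One_nat_def)
  from double_root_recurrence[of "wdown 1 1 1 a b f n", OF this]
  show ?thesis
    using interface_start[OF assms, of a "n - f + 1"] by simp
qed

lemma wbar_across_up:
  assumes "1 \<le> l" "l \<le> f" "1 \<le> j"
  shows "wbar r y z a b f (f - l) (f + j) = wup r y z a b f (f - l) j"
  using assms by (auto simp: wbar_def)

lemma wbar_across_down:
  assumes "2 \<le> l" "l \<le> f"
  shows "wbar r y z a b f (f + j) (f - l) = wdown r y z a b f (f + j) (l - 1)"
  using assms by (auto simp: wbar_def)

theorem lemma3:
  fixes a b :: real and f :: nat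
  assumes "0 < a" "a < 1" "0 < b" "b < 1" "3 \<le> f"
  shows "(\<forall>l j. 1 \<le> l \<and> l \<le> f \<and> 1 \<le> j \<longrightarrow>
            wbar 1 1 1 a b f (f - l) (f + j)
              = a ^ l * b ^ (j - 1) * (real j + real l * (b / a) - real (l + j - 1) * b))
       \<and> (\<forall>l j. 2 \<le> l \<and> l \<le> f \<longrightarrow>
            wbar 1 1 1 a b f (f + j) (f - l)
              = a ^ (l - 1) * b ^ j * (real (j + 1) + real (l - 1) * (b / a) - real (l + j - 1) * b))
       \<and> (\<forall>l. 1 \<le> l \<longrightarrow>
            qstar 1 1 1 a l = real l * a ^ (l - 1)
            \<and> wstar 1 1 1 a l = a ^ (l - 1) * (real l - real (l - 1) * a))"
proof -
  have a_ne: "a \<noteq> 0" "a \<noteq> 1" and b_ne: "b \<noteq> 0" "b \<noteq> 1" using assms by auto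
  show ?thesis
  proof (intro conjI allI impI)
    fix l j :: nat
    assume lj: "1 \<le> l \<and> l \<le> f \<and> 1 \<le> j"
    then have across: "wbar 1 1 1 a b f (f - l) (f + j) = wup 1 1 1 a b f (f - l) j"
      by (simp add: wbar_across_up)
    from lj obtain l' j' where "l = Suc l'" "j = Suc j'"
      by (cases l; cases j) auto
    then show "wbar 1 1 1 a b f (f - l) (f + j)
                 = a ^ l * b ^ (j - 1) * (real j + real l * (b / a) - real (l + j - 1) * b)"
      unfolding across using lj a_ne by (simp add: wup_1 wstar_1 field_simps)
  next
    fix l j :: nat
    assume l: "2 \<le> l \<and> l \<le> f"
    then have across: "wbar 1 1 1 a b f (f + j) (f - l) = wdown 1 1 1 a b f (f + j) (l - 1)"
      by (simp add: wbar_across_down)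
    from l obtain k where "l = Suc (Suc k)"
      by (metis add_2_eq_Suc le_Suc_ex)
    then show "wbar 1 1 1 a b f (f + j) (f - l)
                 = a ^ (l - 1) * b ^ j * (real (j + 1) + real (l - 1) * (b / a) - real (l + j - 1) * b)"
      unfolding across using a_ne b_ne by (simp add: wdown_1 wstar_1 field_simps)
  next
    fix l :: nat
    assume "1 \<le> l"
    with a_ne show "qstar 1 1 1 a l = real l * a ^ (l - 1)"
      and "wstar 1 1 1 a l = a ^ (l - 1) * (real l - real (l - 1) * a)"
      by (cases l; simp add: qstar_1 wstar_1 algebra_simps)+
  qed
qed

end
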